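(* Let $\mathsf{X}\in\mathbb{R}^{n\times r}$ have unit-norm columns and rank $r$. Let $Y$ be the random subset associated with $|\mathrm{columns}(\mathsf{X})\rangle$. Then for every $\mathtt{C}\subseteq\{1,\dots,n\}$, $$\mathbb{P}(Y=\mathtt{C})=\det\begin{bmatrix}0_{|\mathtt{C}|}&\mathsf{X}_{\mathtt{C}:}\\-(\mathsf{X}_{\mathtt{C}:})^\top&\mathrm{skew}(\mathsf{X}^\top\mathsf{X})\end{bmatrix}.$$ For $\mathtt{C}=\emptyset$ the matrix is understood as $\mathrm{skew}(\mathsf{X}^\top\mathsf{X})$. In particular, $\mathbb{P}\big(\mathrm{parity}(|Y|)\neq\mathrm{parity}(r)\big)=0$.
   Context: Work in $(\mathbb{C}^2)^{\otimes n}$ with $c_j=\sigma_z^{\otimes(j-1)}\otimes|0\rangle\langle1|\otimes I^{\otimes(n-j)}$ and $|\emptyset\rangle=|0\cdots0\rangle$. For a unit $x\in\mathbb{R}^n$, set $\mathcal{C}(x)=\sum_ix_i(c_i+c_i^* )$. Put $|\mathrm{columns}(\mathsf{X})\rangle=\mathcal{C}(\mathsf{X}_{:1})\cdots\mathcal{C}(\mathsf{X}_{:r})|\emptyset\rangle$; the order of the columns matters. The random subset $Y$ has law $\mathbb{P}(Y=\mathtt{C})=|\langle e_{\mathtt{C}}|\mathrm{columns}(\mathsf{X})\rangle|^2$, where $|e_{\mathtt{C}}\rangle=|b_1\dots b_n\rangle$ with $b_i=1$ iff $i\in\mathtt{C}$ (measurement of the occupation numbers $c_i^*c_i$). For a square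 matrix $M$, $\mathrm{triu}(M)$ is its upper-triangular part and $\mathrm{skew}(M)=\mathrm{triu}(M)-\mathrm{triu}(M)^\top$. $\mathsf{X}_{\mathtt{C}:}$ is the submatrix of rows indexed by $\mathtt{C}$ in increasing order, and $0_m$ is the $m\times m$ zero matrix. *)

theory Defs
  imports "Jordan_Normal_Form.DL_Rank" "Jordan_Normal_Form.DL_Submatrix" Complex_Main
begin

text \<open>Computational basis of (C^2)^{tensor n}: bit strings of length n
  (False = |0>, True = |1>). Operators are given by their matrix entries
  M b' b = <b'|M|b>, states by their coefficients v b = <b|v>.
  Qubits/sites are indexed 0..n-1 (paper: 1..n).\<close>

type_synonym qstate = "bool list \<Rightarrow> complex"
type_synonym qop = "bool list \<Rightarrow> bool list \<Rightarrow> complex"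
type_synonym qubit_op = "bool \<Rightarrow> bool \<Rightarrow> complex"

definition bitstrings :: "nat \<Rightarrow> bool list set" where
  "bitstrings n = {bs. length bs = n}"

definition kron :: "qubit_op list \<Rightarrow> qop" where
  "kron As b' b = (\<Prod>i<length As. (As ! i) (b' ! i) (b ! i))"

definition sigma_z :: qubit_op where
  "sigma_z a b = (if a = b then (if a then -1 else 1) else 0)"

definition ket0bra1 :: qubit_op where
  "ket0bra1 a b = (if \<not> a \<and> b then 1 else 0)"

definition id_qubit :: qubit_op where
  "id_qubit a b = (if a = b then 1 else 0)"

definition ann :: "nat \<Rightarrow> nat \<Rightarrow> qop" where
  "ann n j = kron (replicate j sigma_z @ [ket0bra1] @ replicate (n - j - 1) id_qubit)"

definition adjoint_op :: "qop \<Rightarrow> qop" where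
  "adjoint_op M b' b = cnj (M b b')"

definition apply_op :: "nat \<Rightarrow> qop \<Rightarrow> qstate \<Rightarrow> qstate" where
  "apply_op n M v b' = (\<Sum>b\<in>bitstrings n. M b' b * v b)"

definition majorana_op :: "nat \<Rightarrow> (nat \<Rightarrow> real) \<Rightarrow> qop" where
  "majorana_op n x b' b =
     (\<Sum>i<n. complex_of_real (x i) * (ann n i b' b + adjoint_op (ann n i) b' b))"

definition vacuum :: "nat \<Rightarrow> qstate" where
  "vacuum n b = (if b = replicate n False then 1 else 0)"

text \<open>|columns(X)> = C(X_{:1}) ... C(X_{:r}) |vacuum>  (C(X_{:r}) acts first).\<close>
definition columns_state :: "real mat \<Rightarrow> qstate" where
  "columns_state X =
     foldr (\<lambda>k v. apply_op (dim_row X) (majorana_op (dim_row X) (\<lambda>i. X $$ (i, k))) v)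
           [0..<dim_col X] (vacuum (dim_row X))"

definition basis_of_set :: "nat \<Rightarrow> nat set \<Rightarrow> bool list" where
  "basis_of_set n C = map (\<lambda>i. i \<in> C) [0..<n]"

definition prob_Y :: "real mat \<Rightarrow> nat set \<Rightarrow> real" where
  "prob_Y X C = (cmod (columns_state X (basis_of_set (dim_row X) C)))\<^sup>2"

definition triu :: "'a::zero mat \<Rightarrow> 'a mat" where
  "triu M = mat (dim_row M) (dim_col M) (\<lambda>(i, j). if i \<le> j then M $$ (i, j) else 0)"

definition skew :: "'a::ab_group_add mat \<Rightarrow> 'a mat" where
  "skew M = triu M - transpose_mat (triu M)"

definition block_matrix :: "real mat \<Rightarrow> nat set \<Rightarrow> real mat" where
  "block_matrix X C =
     (let XC = submatrix X C {0..<dim_col X}; m = dim_row XC in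
      four_block_mat (0\<^sub>m m m) XC (- transpose_mat XC) (skew (transpose_mat X * X)))"

end

theory Submission
  imports Defs "HOL-Combinatorics.Transposition"
begin

text \<open>
  The annihilators satisfy \<open>c\<^sub>i C(x) = - C(x) c\<^sub>i + x\<^sub>i\<close>. Moving \<open>c\<^sub>i\<close> through
  \<open>C(x\<^sub>1) \<dots> C(x\<^sub>r)|0\<rangle>\<close> therefore leaves the sum over \<open>j\<close> of \<open>(-1)\<^sup>j x\<^sub>j(i)\<close> times
  the same state with \<open>C(x\<^sub>j)\<close> omitted, and likewise the vacuum amplitude of
  \<open>C(x) C(x\<^sub>1) \<dots> C(x\<^sub>r)|0\<rangle>\<close> is the sum of \<open>(-1)\<^sup>j \<langle>x, x\<^sub>j\<rangle>\<close> times the amplitude with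
  \<open>C(x\<^sub>j)\<close> omitted. These are first-row expansions of a Pfaffian, so peeling off the sites
  of \<open>C\<close> in increasing order shows that \<open>\<langle>e\<^sub>C|columns(X)\<rangle>\<close> is, up to sign, the Pfaffian
  of the block matrix. Squaring and \<open>det A = Pf(A)\<^sup>2\<close> for skew-symmetric \<open>A\<close> give the
  probability, and a skew matrix of odd size has vanishing Pfaffian.

  \<open>det A = Pf(A)\<^sup>2\<close> is proved by elimination: adding a multiple of one entry of the
  underlying list of vectors to another changes neither side, and once the first row has
  a single non-zero entry both sides factor through the matrix with two rows and
  columns removed.
\<close>

section \<open>Pfaffians\<close>

fun remove_nth :: "nat \<Rightarrow> 'a list \<Rightarrow> 'a list" where
  "remove_nth _ [] = []"
| "remove_nth 0 (x # xs) = xs"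
| "remove_nth (Suc j) (x # xs) = x # remove_nth j xs"

lemma length_remove_nth_le: "length (remove_nth j xs) \<le> length xs"
  by (induction j xs rule: remove_nth.induct) auto

lemma length_remove_nth [simp]: "j < length xs \<Longrightarrow> length (remove_nth j xs) = length xs - 1"
  by (induction j xs rule: remove_nth.induct) auto

lemma nth_remove_nth:
  "j < length xs \<Longrightarrow> l < length xs - 1 \<Longrightarrow> remove_nth j xs ! l = xs ! (if l < j then l else Suc l)"
proof (induction j xs arbitrary: l rule: remove_nth.induct)
  case (3 j x xs)
  then show ?case by (cases l) auto
qed auto

lemma set_remove_nth_subset: "set (remove_nth j xs) \<subseteq> set xs"
  by (induction j xs rule: remove_nth.induct) auto

lemma remove_nth_map: "remove_nth j (map f xs) = map f (remove_nth j xs)"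
  by (induction j xs rule: remove_nth.induct) auto

lemma remove_nth_append_right:
  "length xs \<le> j \<Longrightarrow> remove_nth j (xs @ ys) = xs @ remove_nth (j - length xs) ys"
proof (induction xs arbitrary: j)
  case (Cons x xs)
  then show ?case by (cases j) auto
qed auto

lemma remove_nth_remove_nth:
  "j \<le> l \<Longrightarrow> remove_nth l (remove_nth j xs) = remove_nth j (remove_nth (Suc l) xs)"
proof (induction xs arbitrary: j l)
  case (Cons x xs)
  show ?case
  proof (cases j)
    case 0
    then show ?thesis by (cases l) auto
  next
    case (Suc j')
    then obtain l' where "l = Suc l'" using Cons.prems by (cases l) auto
    then show ?thesis using Cons Suc by auto
  qed
qed auto

lemma remove_nth_list_update:
  "k < length xs \<Longrightarrow> remove_nth j (xs[k := y]) =
     (if j = k then remove_nth j xs else (remove_nth j xs)[(if k < j then k else k - 1) := y])"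
proof (induction j xs arbitrary: k rule: remove_nth.induct)
  case (2 x xs)
  then show ?case by (cases k) auto
next
  case (3 j x xs)
  then show ?case by (cases k) (auto split: nat.splits)
qed auto

lemma sorted_wrt_remove_nth: "sorted_wrt P xs \<Longrightarrow> sorted_wrt P (remove_nth j xs)"
  by (induction j xs rule: remove_nth.induct) (auto dest: set_remove_nth_subset[THEN subsetD])

definition swap_adjacent :: "nat \<Rightarrow> 'a list \<Rightarrow> 'a list" where
  "swap_adjacent i xs = xs[i := xs ! Suc i, Suc i := xs ! i]"

lemma length_swap_adjacent [simp]: "length (swap_adjacent i xs) = length xs"
  by (simp add: swap_adjacent_def)

lemma nth_swap_adjacent:
  "Suc i < length xs \<Longrightarrow> j < length xs \<Longrightarrow>
     swap_adjacent i xs ! j = xs ! (if j = i then Suc i else if j = Suc i then i else j)"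
  by (simp add: swap_adjacent_def nth_list_update)

lemma swap_adjacent_Cons_Cons [simp]: "swap_adjacent 0 (x # y # zs) = y # x # zs"
  by (simp add: swap_adjacent_def)

lemma swap_adjacent_Suc_Cons [simp]: "swap_adjacent (Suc i) (x # xs) = x # swap_adjacent i xs"
  by (simp add: swap_adjacent_def)

lemma remove_nth_swap_adjacent_before:
  "Suc i < length xs \<Longrightarrow> j < i \<Longrightarrow> remove_nth j (swap_adjacent i xs) = swap_adjacent (i - 1) (remove_nth j xs)"
  by (rule nth_equalityI) (auto simp: nth_remove_nth nth_swap_adjacent)

lemma remove_nth_swap_adjacent_after:
  "Suc i < j \<Longrightarrow> j < length xs \<Longrightarrow> remove_nth j (swap_adjacent i xs) = swap_adjacent i (remove_nth j xs)"
  by (rule nth_equalityI) (auto simp: nth_remove_nth nth_swap_adjacent)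

lemma remove_nth_swap_adjacent_left:
  "Suc i < length xs \<Longrightarrow> remove_nth i (swap_adjacent i xs) = remove_nth (Suc i) xs"
  by (rule nth_equalityI) (auto simp: nth_remove_nth nth_swap_adjacent less_Suc_eq)

lemma remove_nth_swap_adjacent_right:
  "Suc i < length xs \<Longrightarrow> remove_nth (Suc i) (swap_adjacent i xs) = remove_nth i xs"
  by (rule nth_equalityI) (auto simp: nth_remove_nth nth_swap_adjacent less_Suc_eq)

text \<open>The Pfaffian of the skew matrix \<open>(f (xs ! i) (xs ! j))\<^sub>i\<^sub>j\<close>, expanded along its first row.\<close>

function pfaffian :: "('a \<Rightarrow> 'a \<Rightarrow> 'b::comm_ring_1) \<Rightarrow> 'a list \<Rightarrow> 'b" where
  "pfaffian f [] = 1"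
| "pfaffian f (x # xs) =
     (\<Sum>j<length xs. (-1) ^ j * f x (xs ! j) * pfaffian f (remove_nth j xs))"
  by pat_completeness auto
termination
  by (relation "measure (\<lambda>(f, xs). length xs)") (auto simp: le_imp_less_Suc length_remove_nth_le)

lemma pfaffian_map: "pfaffian f (map \<phi> xs) = pfaffian (\<lambda>a b. f (\<phi> a) (\<phi> b)) xs"
  by (induction "\<lambda>a b. f (\<phi> a) (\<phi> b)" xs rule: pfaffian.induct) (auto simp: remove_nth_map[symmetric])

lemma pfaffian_cong:
  "(\<And>a b. a \<in> set xs \<Longrightarrow> b \<in> set xs \<Longrightarrow> f a b = g a b) \<Longrightarrow> pfaffian f xs = pfaffian g xs"
proof (induction f xs rule: pfaffian.induct)
  case (2 f x xs)
  have "pfaffian f (remove_nth j xs) = pfaffian g (remove_nth j xs)" if "j < length xs" for j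
    using "2.IH"[of j] that "2.prems" set_remove_nth_subset[of j xs] by auto
  with "2.prems" show ?case by (auto intro!: sum.cong)
qed simp

lemma pfaffian_odd_length: "odd (length xs) \<Longrightarrow> pfaffian f xs = 0"
proof (induction f xs rule: pfaffian.induct)
  case (2 f x xs)
  then have "pfaffian f (remove_nth j xs) = 0" if "j < length xs" for j
    using that by (intro "2.IH") auto
  then show ?case by simp
qed simp

lemma sum_skip_index_alternating:
  fixes g :: "nat \<Rightarrow> 'a::comm_ring_1"
  assumes "j < m"
  shows "(\<Sum>l<m - 1. (-1) ^ l * g (if l < j then l else Suc l))
       = (\<Sum>k<m. of_int (sgn (int j - int k)) * (-1) ^ k * g k)"
proof -
  from assms have "Suc j \<le> m" by simp
  then show ?thesis
  proof (induction m rule: dec_induct)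
    case base
    then show ?case by (auto intro!: sum.cong)
  next
    case (step m)
    then obtain m' where "m = Suc m'" by (cases m) auto
    with step show ?case by simp
  qed
qed

lemma pfaffian_Cons_Cons:
  "pfaffian f (u # v # zs) = f u v * pfaffian f zs
     - (\<Sum>j<length zs. \<Sum>k<length zs. of_int (sgn (int j - int k)) * (-1) ^ (j + k)
          * f u (zs ! j) * f v (zs ! k) * pfaffian f (remove_nth (min j k) (remove_nth (max j k) zs)))"
proof -
  let ?m = "length zs"
  let ?P = "\<lambda>j k. pfaffian f (remove_nth (min j k) (remove_nth (max j k) zs))"
  have inner: "pfaffian f (v # remove_nth j zs)
      = (\<Sum>k<?m. of_int (sgn (int j - int k)) * (-1) ^ k * (f v (zs ! k) * ?P j k))" if j: "j < ?m" for j
  proof -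
    have "pfaffian f (v # remove_nth j zs)
        = (\<Sum>l<?m - 1. (-1) ^ l * (\<lambda>k. f v (zs ! k) * ?P j k) (if l < j then l else Suc l))"
      unfolding pfaffian.simps(2) length_remove_nth[OF j]
    proof (intro sum.cong refl)
      fix l assume l: "l \<in> {..<?m - 1}"
      show "(-1) ^ l * f v (remove_nth j zs ! l) * pfaffian f (remove_nth l (remove_nth j zs))
          = (-1) ^ l * (\<lambda>k. f v (zs ! k) * ?P j k) (if l < j then l else Suc l)"
      proof (cases "l < j")
        case True
        with j l show ?thesis by (simp add: nth_remove_nth)
      next
        case False
        with j l show ?thesis by (simp add: nth_remove_nth remove_nth_remove_nth)
      qed
    qed
    also have "\<dots> = (\<Sum>k<?m. of_int (sgn (int j - int k)) * (-1) ^ k * (f v (zs ! k) * ?P j k))"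
      by (rule sum_skip_index_alternating[OF j])
    finally show ?thesis .
  qed
  have "pfaffian f (u # v # zs) = f u v * pfaffian f zs
      + (\<Sum>j<?m. (-1) ^ Suc j * f u (zs ! j) * pfaffian f (v # remove_nth j zs))"
    by (subst pfaffian.simps, subst length_Cons, subst sum.lessThan_Suc_shift) simp
  also have "(\<Sum>j<?m. (-1) ^ Suc j * f u (zs ! j) * pfaffian f (v # remove_nth j zs))
      = - (\<Sum>j<?m. \<Sum>k<?m. of_int (sgn (int j - int k)) * (-1) ^ (j + k)
          * f u (zs ! j) * f v (zs ! k) * ?P j k)"
    unfolding sum_negf[symmetric]
    by (intro sum.cong refl) (simp add: inner sum_distrib_left power_add mult_ac del: pfaffian.simps(2))
  finally show ?thesis by simp
qed

lemma pfaffian_swap_first: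
  assumes skew: "\<And>a b. f a b = - f b a"
  shows "pfaffian f (v # u # zs) = - pfaffian f (u # v # zs)"
proof -
  let ?m = "length zs"
  define S where "S = (\<lambda>u v. \<Sum>j<?m. \<Sum>k<?m. of_int (sgn (int j - int k)) * (-1) ^ (j + k)
      * f u (zs ! j) * f v (zs ! k) * pfaffian f (remove_nth (min j k) (remove_nth (max j k) zs)))"
  have sgn_swap: "of_int (sgn (int j - int k)) = - (of_int (sgn (int k - int j)) :: 'b)" for j k
    by (simp add: sgn_if)
  have "S v u = (\<Sum>k<?m. \<Sum>j<?m. of_int (sgn (int j - int k)) * (-1) ^ (j + k)
      * f v (zs ! j) * f u (zs ! k) * pfaffian f (remove_nth (min j k) (remove_nth (max j k) zs)))"
    unfolding S_def by (rule sum.swap)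
  also have "\<dots> = - S u v"
    unfolding S_def sum_negf[symmetric]
  proof (intro sum.cong refl)
    fix j k
    have "remove_nth (min k j) (remove_nth (max k j) zs) = remove_nth (min j k) (remove_nth (max j k) zs)"
      by (simp add: min.commute max.commute)
    then show "of_int (sgn (int k - int j)) * (-1) ^ (k + j) * f v (zs ! k) * f u (zs ! j)
          * pfaffian f (remove_nth (min k j) (remove_nth (max k j) zs))
        = - (of_int (sgn (int j - int k)) * (-1) ^ (j + k) * f u (zs ! j) * f v (zs ! k)
          * pfaffian f (remove_nth (min j k) (remove_nth (max j k) zs)))"
      using sgn_swap[of k j] by (simp add: add.commute mult_ac)
  qed
  finally have "S v u = - S u v" .
  moreover have "pfaffian f (x # y # zs) = f x y * pfaffian f zs - S x y" for x y
    unfolding S_def by (rule pfaffian_Cons_Cons)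
  ultimately show ?thesis
    using skew[of v u] by simp
qed

lemma pfaffian_swap_adjacent:
  assumes skew: "\<And>a b. f a b = - f b a" and i: "Suc i < length xs"
  shows "pfaffian f (swap_adjacent i xs) = - pfaffian f xs"
  using i
proof (induction "length xs" arbitrary: xs i rule: less_induct)
  case less
  obtain x xs' where xs: "xs = x # xs'"
    using less.prems by (cases xs) auto
  show ?case
  proof (cases i)
    case 0
    then obtain y zs where "xs' = y # zs"
      using less.prems xs by (cases xs') auto
    with 0 xs show ?thesis
      using pfaffian_swap_first[where f = f and v = y and u = x and zs = zs, OF skew] by (simp del: pfaffian.simps)
  next
    case (Suc i')
    let ?L = "length xs'"
    have i': "Suc i' < ?L" using less.prems Suc xs by simp
    define g where "g = (\<lambda>j. (-1) ^ j * f x (xs' ! j) * pfaffian f (remove_nth j xs'))"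
    define \<tau> where "\<tau> = Transposition.transpose i' (Suc i')"
    have term_swap: "(-1) ^ j * f x (swap_adjacent i' xs' ! j) * pfaffian f (remove_nth j (swap_adjacent i' xs'))
        = - g (\<tau> j)" if j: "j < ?L" for j
    proof -
      consider "j = i'" | "j = Suc i'" | "j < i'" | "Suc i' < j" by linarith
      then show ?thesis
      proof cases
        case 1
        with i' show ?thesis by (simp add: nth_swap_adjacent remove_nth_swap_adjacent_left g_def \<tau>_def)
      next
        case 2
        with i' show ?thesis by (simp add: nth_swap_adjacent remove_nth_swap_adjacent_right g_def \<tau>_def)
      next
        case 3
        have "pfaffian f (swap_adjacent (i' - 1) (remove_nth j xs')) = - pfaffian f (remove_nth j xs')"
          by (rule less.hyps) (use 3 i' xs in auto)
        with 3 i' j show ?thesis by (simp add: nth_swap_adjacent remove_nth_swap_adjacent_before g_def \<tau>_def)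
      next
        case 4
        have "pfaffian f (swap_adjacent i' (remove_nth j xs')) = - pfaffian f (remove_nth j xs')"
          by (rule less.hyps) (use 4 i' j xs in auto)
        with 4 i' j show ?thesis by (simp add: nth_swap_adjacent remove_nth_swap_adjacent_after g_def \<tau>_def)
      qed
    qed
    have "pfaffian f (swap_adjacent i xs) = (\<Sum>j<?L. - g (\<tau> j))"
      using Suc term_swap xs by simp
    also have "\<dots> = - (\<Sum>j<?L. g j)"
      using sum.permute[OF permutes_swap_id[of i' "{..<?L}" "Suc i'"], of g] i'
      by (simp add: sum_negf \<tau>_def)
    finally show ?thesis by (simp add: g_def xs)
  qed
qed

lemma pfaffian_eq_0_if_nth_eq:
  fixes f :: "'a \<Rightarrow> 'a \<Rightarrow> 'b::{idom, ring_char_0}"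
  assumes skew: "\<And>a b. f a b = - f b a"
  shows "i < j \<Longrightarrow> j < length xs \<Longrightarrow> xs ! i = xs ! j \<Longrightarrow> pfaffian f xs = 0"
proof (induction j arbitrary: xs)
  case (Suc j)
  show ?case
  proof (cases "j = i")
    case True
    with Suc.prems have "swap_adjacent i xs = xs"
      by (intro nth_equalityI) (auto simp: nth_swap_adjacent)
    then have "pfaffian f xs = - pfaffian f xs"
      using pfaffian_swap_adjacent[OF skew, of i xs] Suc.prems True by simp
    then show ?thesis
      by (metis eq_neg_iff_add_eq_0 mult_2 mult_eq_0_iff zero_neq_numeral)
  next
    case False
    with Suc.prems have "pfaffian f (swap_adjacent j xs) = 0"
      by (intro Suc.IH) (auto simp: nth_swap_adjacent)
    then show ?thesis
      using pfaffian_swap_adjacent[OF skew, of j xs] Suc.prems by simp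
  qed
qed simp

section \<open>The determinant of a skew matrix is the square of its Pfaffian\<close>

definition form_mat :: "('a \<Rightarrow> 'b \<Rightarrow> 'c) \<Rightarrow> 'a list \<Rightarrow> 'b list \<Rightarrow> 'c mat" where
  "form_mat f rs cs = mat (length rs) (length cs) (\<lambda>(i, j). f (rs ! i) (cs ! j))"

lemma form_mat_carrier [simp]: "form_mat f rs cs \<in> carrier_mat (length rs) (length cs)"
  by (simp add: form_mat_def)

lemma dim_row_form_mat [simp]: "dim_row (form_mat f rs cs) = length rs"
  and dim_col_form_mat [simp]: "dim_col (form_mat f rs cs) = length cs"
  by (simp_all add: form_mat_def)

lemma index_form_mat [simp]:
  "i < length rs \<Longrightarrow> j < length cs \<Longrightarrow> form_mat f rs cs $$ (i, j) = f (rs ! i) (cs ! j)"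
  by (simp add: form_mat_def)

lemma transpose_form_mat: "transpose_mat (form_mat f rs cs) = form_mat (\<lambda>a b. f b a) cs rs"
  by (rule eq_matI) auto

lemma mat_delete_form_mat:
  "i < length rs \<Longrightarrow> j < length cs \<Longrightarrow>
     mat_delete (form_mat f rs cs) i j = form_mat f (remove_nth i rs) (remove_nth j cs)"
  by (rule eq_matI) (auto simp: mat_delete_def nth_remove_nth)

lemma det_form_mat_Cons:
  fixes f :: "'a \<Rightarrow> 'b \<Rightarrow> 'c::comm_ring_1"
  assumes len: "length cs = Suc (length rs)"
  shows "det (form_mat f (r # rs) cs)
       = (\<Sum>j<length cs. (-1) ^ j * f r (cs ! j) * det (form_mat f rs (remove_nth j cs)))"
proof -
  let ?A = "form_mat f (r # rs) cs"
  have A: "?A \<in> carrier_mat (length cs) (length cs)"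
    using form_mat_carrier[of f "r # rs" cs] len by simp
  have "det ?A = (\<Sum>j<length cs. ?A $$ (0, j) * cofactor ?A 0 j)"
    by (rule laplace_expansion_row[OF A]) (simp add: len)
  also have "\<dots> = (\<Sum>j<length cs. (-1) ^ j * f r (cs ! j) * det (form_mat f rs (remove_nth j cs)))"
    by (intro sum.cong refl) (simp add: cofactor_def mat_delete_form_mat)
  finally show ?thesis .
qed

lemma det_form_mat_flip:
  "length rs = length cs \<Longrightarrow> det (form_mat f rs cs) = det (form_mat (\<lambda>a b. f b a) cs rs)"
  using det_transpose[of "form_mat f rs cs" "length rs"] form_mat_carrier[of f rs cs]
  by (simp add: transpose_form_mat)

lemma det_form_mat_Cons_col:
  fixes f :: "'a \<Rightarrow> 'b \<Rightarrow> 'c::comm_ring_1"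
  assumes len: "length rs = Suc (length cs)"
  shows "det (form_mat f rs (c # cs))
       = (\<Sum>i<length rs. (-1) ^ i * f (rs ! i) c * det (form_mat f (remove_nth i rs) cs))"
proof -
  have "det (form_mat f rs (c # cs)) = det (form_mat (\<lambda>a b. f b a) (c # cs) rs)"
    by (rule det_form_mat_flip) (simp add: len)
  also have "\<dots> = (\<Sum>i<length rs. (-1) ^ i * f (rs ! i) c * det (form_mat (\<lambda>a b. f b a) cs (remove_nth i rs)))"
    by (rule det_form_mat_Cons) (simp add: len)
  also have "\<dots> = (\<Sum>i<length rs. (-1) ^ i * f (rs ! i) c * det (form_mat f (remove_nth i rs) cs))"
    using len by (intro sum.cong refl) (simp add: det_form_mat_flip[of "remove_nth _ rs" cs f])
  finally show ?thesis .
qed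

locale alternating_form =
  fixes \<beta> :: "('a \<Rightarrow> 'b::field_char_0) \<Rightarrow> ('a \<Rightarrow> 'b) \<Rightarrow> 'b"
  assumes add_scaled_left: "\<beta> (\<lambda>t. u t + c * w t) z = \<beta> u z + c * \<beta> w z"
    and skew: "\<beta> u w = - \<beta> w u"
begin

lemma add_scaled_right: "\<beta> z (\<lambda>t. u t + c * w t) = \<beta> z u + c * \<beta> z w"
proof -
  have "\<beta> z (\<lambda>t. u t + c * w t) = - \<beta> (\<lambda>t. u t + c * w t) z"
    by (rule skew)
  also have "\<dots> = - (\<beta> u z + c * \<beta> w z)"
    by (simp only: add_scaled_left)
  also have "\<dots> = \<beta> z u + c * \<beta> z w"
    by (simp only: skew[of u z] skew[of w z]) simp
  finally show ?thesis .
qed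

lemma self_eq_0 [simp]: "\<beta> u u = 0"
  using skew[of u u] by (metis eq_neg_iff_add_eq_0 mult_2 mult_eq_0_iff zero_neq_numeral)

lemma pfaffian_update_add_scaled:
  "k < length xs \<Longrightarrow>
     pfaffian \<beta> (xs[k := (\<lambda>t. u t + c * w t)]) = pfaffian \<beta> (xs[k := u]) + c * pfaffian \<beta> (xs[k := w])"
proof (induction "length xs" arbitrary: xs k rule: less_induct)
  case less
  obtain x xs' where xs: "xs = x # xs'"
    using less.prems by (cases xs) auto
  show ?case
  proof (cases k)
    case 0
    with xs show ?thesis
      by (simp add: add_scaled_left sum.distrib sum_distrib_left algebra_simps)
  next
    case (Suc k')
    have k': "k' < length xs'" using less.prems Suc xs by simp
    define F where "F = (\<lambda>y j. (-1) ^ j * \<beta> x (xs'[k' := y] ! j) * pfaffian \<beta> (remove_nth j (xs'[k' := y])))"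
    have pf_F: "pfaffian \<beta> (xs[k := y]) = (\<Sum>j<length xs'. F y j)" for y
      by (simp add: xs Suc F_def)
    have "F (\<lambda>t. u t + c * w t) j = F u j + c * F w j" if j: "j < length xs'" for j
    proof (cases "j = k'")
      case True
      with k' show ?thesis by (simp add: F_def remove_nth_list_update add_scaled_right algebra_simps)
    next
      case False
      let ?k = "if k' < j then k' else k' - 1"
      have "pfaffian \<beta> ((remove_nth j xs')[?k := (\<lambda>t. u t + c * w t)])
          = pfaffian \<beta> ((remove_nth j xs')[?k := u]) + c * pfaffian \<beta> ((remove_nth j xs')[?k := w])"
        by (rule less.hyps) (use False k' j xs in auto)
      with False k' show ?thesis by (simp add: F_def remove_nth_list_update algebra_simps)
    qed
    then show ?thesis
      unfolding pf_F by (simp add: sum.distrib sum_distrib_left)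
  qed
qed

lemma pfaffian_add_multiple:
  assumes "k \<noteq> l" "k < length xs" "l < length xs"
  shows "pfaffian \<beta> (xs[k := (\<lambda>t. (xs ! k) t + c * (xs ! l) t)]) = pfaffian \<beta> xs"
proof -
  have "pfaffian \<beta> (xs[k := xs ! l]) = 0"
  proof (cases "k < l")
    case True
    then show ?thesis
      using pfaffian_eq_0_if_nth_eq[OF skew, of k l "xs[k := xs ! l]"] assms by simp
  next
    case False
    then show ?thesis
      using pfaffian_eq_0_if_nth_eq[OF skew, of l k "xs[k := xs ! l]"] assms by simp
  qed
  then show ?thesis
    using pfaffian_update_add_scaled[of k xs "xs ! k" c "xs ! l"] assms by simp
qed

lemma det_form_mat_add_multiple:
  fixes c :: 'b
  assumes kl: "k \<noteq> l" "k < length xs" "l < length xs"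
  defines "xs' \<equiv> xs[k := (\<lambda>t. (xs ! k) t + c * (xs ! l) t)]"
  shows "det (form_mat \<beta> xs' xs') = det (form_mat \<beta> xs xs)"
proof -
  have len': "length xs' = length xs" by (simp add: xs'_def)
  have "det (form_mat \<beta> xs' xs') = det (addrow c k l (form_mat \<beta> xs xs'))"
    by (rule arg_cong[where f = det], rule eq_matI)
      (use kl in \<open>auto simp: xs'_def add_scaled_left nth_list_update\<close>)
  also have "\<dots> = det (form_mat \<beta> xs xs')"
    by (rule det_addrow[of l "length xs"]) (use kl len' form_mat_carrier[of \<beta> xs xs'] in auto)
  also have "form_mat \<beta> xs xs' = addcol c k l (form_mat \<beta> xs xs)"
    by (rule eq_matI) (use kl in \<open>auto simp: xs'_def add_scaled_right nth_list_update\<close>)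
  also have "det \<dots> = det (form_mat \<beta> xs xs)"
    by (rule det_addcol[of l "length xs"]) (use kl in auto)
  finally show ?thesis .
qed

lemma pfaffian_Cons_isolated:
  assumes p: "p < length ys" and orth: "\<And>l. l < length ys \<Longrightarrow> l \<noteq> p \<Longrightarrow> \<beta> x (ys ! l) = 0"
  shows "pfaffian \<beta> (x # ys) = (-1) ^ p * \<beta> x (ys ! p) * pfaffian \<beta> (remove_nth p ys)"
proof -
  have "pfaffian \<beta> (x # ys) = (\<Sum>j\<in>{p}. (-1) ^ j * \<beta> x (ys ! j) * pfaffian \<beta> (remove_nth j ys))"
    unfolding pfaffian.simps(2) by (rule sum.mono_neutral_right) (use p orth in auto)
  then show ?thesis by simp
qed

lemma det_form_mat_Cons_isolated:
  assumes p: "p < length ys" and orth: "\<And>l. l < length ys \<Longrightarrow> l \<noteq> p \<Longrightarrow> \<beta> x (ys ! l) = 0"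
  shows "det (form_mat \<beta> (x # ys) (x # ys))
       = (\<beta> x (ys ! p))\<^sup>2 * det (form_mat \<beta> (remove_nth p ys) (remove_nth p ys))"
proof -
  let ?y = "ys ! p" and ?zs = "remove_nth p ys"
  have "det (form_mat \<beta> (x # ys) (x # ys))
      = (\<Sum>j<length (x # ys). (-1) ^ j * \<beta> x ((x # ys) ! j) * det (form_mat \<beta> ys (remove_nth j (x # ys))))"
    by (rule det_form_mat_Cons) simp
  also have "\<dots> = (\<Sum>j\<in>{Suc p}. (-1) ^ j * \<beta> x ((x # ys) ! j) * det (form_mat \<beta> ys (remove_nth j (x # ys))))"
    by (rule sum.mono_neutral_right) (use p orth in \<open>auto simp: nth_Cons split: nat.split\<close>)
  also have "\<dots> = - ((-1) ^ p * \<beta> x ?y * det (form_mat \<beta> ys (x # ?zs)))"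
    by simp
  also have "det (form_mat \<beta> ys (x # ?zs))
      = (\<Sum>i<length ys. (-1) ^ i * \<beta> (ys ! i) x * det (form_mat \<beta> (remove_nth i ys) ?zs))"
    by (rule det_form_mat_Cons_col) (use p in simp)
  also have "\<dots> = (\<Sum>i\<in>{p}. (-1) ^ i * \<beta> (ys ! i) x * det (form_mat \<beta> (remove_nth i ys) ?zs))"
    using p orth skew[of "ys ! _" x] by (intro sum.mono_neutral_right) auto
  also have "\<dots> = - ((-1) ^ p * \<beta> x ?y * det (form_mat \<beta> ?zs ?zs))"
    using skew[of ?y x] by simp
  finally show ?thesis
    by (simp add: power2_eq_square flip: power_add)
qed

lemma pfaffian_det_add_multiples_of_entry:
  fixes c :: "nat \<Rightarrow> 'b"
  assumes p: "p < length ys"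
  defines "ys' \<equiv> map (\<lambda>l. if l = p then ys ! l else (\<lambda>t. (ys ! l) t + c l * (ys ! p) t)) [0..<length ys]"
  shows "pfaffian \<beta> (x # ys') = pfaffian \<beta> (x # ys)
       \<and> det (form_mat \<beta> (x # ys') (x # ys')) = det (form_mat \<beta> (x # ys) (x # ys))"
proof -
  define E where "E = (\<lambda>k. map (\<lambda>l. if l < k \<and> l \<noteq> p then (\<lambda>t. (ys ! l) t + c l * (ys ! p) t) else ys ! l)
      [0..<length ys])"
  have "pfaffian \<beta> (x # E k) = pfaffian \<beta> (x # ys)
      \<and> det (form_mat \<beta> (x # E k) (x # E k)) = det (form_mat \<beta> (x # ys) (x # ys))" if "k \<le> length ys" for k
    using that
  proof (induction k)
    case 0
    have "E 0 = ys" by (simp add: E_def map_nth)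
    then show ?case by simp
  next
    case (Suc k)
    show ?case
    proof (cases "k = p")
      case True
      then have "E (Suc k) = E k" by (simp add: E_def less_Suc_eq)
      with Suc show ?thesis by simp
    next
      case False
      let ?L = "x # E k"
      have idx: "Suc k \<noteq> Suc p" "Suc k < length ?L" "Suc p < length ?L"
        using False Suc.prems p by (auto simp: E_def)
      have step: "x # E (Suc k) = ?L[Suc k := (\<lambda>t. (?L ! Suc k) t + c k * (?L ! Suc p) t)]"
        using False Suc.prems p by (intro nth_equalityI) (auto simp: E_def nth_Cons nth_list_update split: nat.split)
      have "pfaffian \<beta> (x # E (Suc k)) = pfaffian \<beta> ?L"
        unfolding step by (rule pfaffian_add_multiple[OF idx])
      moreover have "det (form_mat \<beta> (x # E (Suc k)) (x # E (Suc k))) = det (form_mat \<beta> ?L ?L)"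
        unfolding step by (rule det_form_mat_add_multiple[OF idx])
      ultimately show ?thesis
        using Suc.IH Suc.prems by simp
    qed
  qed
  moreover have "E (length ys) = ys'"
    unfolding E_def ys'_def by (rule map_cong) auto
  ultimately show ?thesis by blast
qed

lemma det_form_mat_Cons_orthogonal:
  assumes "\<And>l. l < length ys \<Longrightarrow> \<beta> x (ys ! l) = 0"
  shows "det (form_mat \<beta> (x # ys) (x # ys)) = 0"
proof -
  have "det (form_mat \<beta> (x # ys) (x # ys)) = (\<Sum>j<length (x # ys).
      (-1) ^ j * \<beta> x ((x # ys) ! j) * det (form_mat \<beta> ys (remove_nth j (x # ys))))"
    by (rule det_form_mat_Cons) simp
  also have "\<dots> = 0"
  proof (intro sum.neutral ballI)
    fix j assume "j \<in> {..<length (x # ys)}"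
    with assms show "(-1) ^ j * \<beta> x ((x # ys) ! j) * det (form_mat \<beta> ys (remove_nth j (x # ys))) = 0"
      by (cases j) auto
  qed
  finally show ?thesis .
qed

lemma pfaffian_det_Cons_reduce:
  assumes p: "p < length ys" and a: "\<beta> x (ys ! p) \<noteq> 0"
  obtains zs where "length zs = length ys - 1"
    "pfaffian \<beta> (x # ys) = (-1) ^ p * \<beta> x (ys ! p) * pfaffian \<beta> zs"
    "det (form_mat \<beta> (x # ys) (x # ys)) = (\<beta> x (ys ! p))\<^sup>2 * det (form_mat \<beta> zs zs)"
proof -
  txt \<open>Clear the row of \<open>x\<close> by subtracting multiples of \<open>ys ! p\<close> from the other entries.\<close>
  let ?c = "\<lambda>l. \<beta> (ys ! l) x / \<beta> x (ys ! p)"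
  define ys' where "ys' = map (\<lambda>l. if l = p then ys ! l else (\<lambda>t. (ys ! l) t + ?c l * (ys ! p) t)) [0..<length ys]"
  have ys': "length ys' = length ys" "ys' ! p = ys ! p"
    using p by (simp_all add: ys'_def)
  have orth: "\<beta> x (ys' ! l) = 0" if "l < length ys" "l \<noteq> p" for l
  proof -
    from that have "ys' ! l = (\<lambda>t. (ys ! l) t + ?c l * (ys ! p) t)"
      by (simp add: ys'_def)
    then have "\<beta> x (ys' ! l) = \<beta> x (ys ! l) + ?c l * \<beta> x (ys ! p)"
      by (simp only: add_scaled_right)
    with a show ?thesis
      using skew[of "ys ! l" x] by simp
  qed
  show ?thesis
  proof (rule that[of "remove_nth p ys'"])
    show "length (remove_nth p ys') = length ys - 1"
      using p ys' by simp
    show "pfaffian \<beta> (x # ys) = (-1) ^ p * \<beta> x (ys ! p) * pfaffian \<beta> (remove_nth p ys')"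
      using pfaffian_det_add_multiples_of_entry[OF p, where c = ?c and x = x]
        pfaffian_Cons_isolated[of p ys' x] p ys' orth
      by (simp add: ys'_def)
    show "det (form_mat \<beta> (x # ys) (x # ys)) = (\<beta> x (ys ! p))\<^sup>2 * det (form_mat \<beta> (remove_nth p ys') (remove_nth p ys'))"
      using pfaffian_det_add_multiples_of_entry[OF p, where c = ?c and x = x]
        det_form_mat_Cons_isolated[of p ys' x] p ys' orth
      by (simp add: ys'_def)
  qed
qed

theorem det_form_mat_eq_pfaffian_sq: "det (form_mat \<beta> vs vs) = (pfaffian \<beta> vs)\<^sup>2"
proof (induction "length vs" arbitrary: vs rule: less_induct)
  case less
  show ?case
  proof (cases vs)
    case Nil
    have "form_mat \<beta> [] [] = 1\<^sub>m 0"
      by (rule eq_matI) auto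
    with Nil show ?thesis by simp
  next
    case (Cons x ys)
    show ?thesis
    proof (cases "\<exists>p<length ys. \<beta> x (ys ! p) \<noteq> 0")
      case False
      then show ?thesis
        using det_form_mat_Cons_orthogonal[of ys x] by (simp add: Cons)
    next
      case True
      then obtain p where p: "p < length ys" and a: "\<beta> x (ys ! p) \<noteq> 0" by blast
      obtain zs where zs: "length zs = length ys - 1"
        "pfaffian \<beta> vs = (-1) ^ p * \<beta> x (ys ! p) * pfaffian \<beta> zs"
        "det (form_mat \<beta> vs vs) = (\<beta> x (ys ! p))\<^sup>2 * det (form_mat \<beta> zs zs)"
        using pfaffian_det_Cons_reduce[OF p a] unfolding Cons by blast
      have "det (form_mat \<beta> zs zs) = (pfaffian \<beta> zs)\<^sup>2"
        by (rule less.hyps) (use zs(1) Cons in simp)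
      with zs(2,3) show ?thesis
        by (simp add: power_mult_distrib flip: power_mult)
    qed
  qed
qed

end

definition kernel_form :: "('a \<Rightarrow> 'a \<Rightarrow> 'b::field_char_0) \<Rightarrow> 'a list \<Rightarrow> (nat \<Rightarrow> 'b) \<Rightarrow> (nat \<Rightarrow> 'b) \<Rightarrow> 'b" where
  "kernel_form K xs u w = (\<Sum>a<length xs. \<Sum>b<length xs. u a * K (xs ! a) (xs ! b) * w b)"

lemma alternating_form_kernel_form:
  assumes skew: "\<And>a b. K a b = - K b a"
  shows "alternating_form (kernel_form K xs)"
proof
  show "kernel_form K xs (\<lambda>t. u t + c * w t) z = kernel_form K xs u z + c * kernel_form K xs w z" for u c w z
    by (simp add: kernel_form_def distrib_right sum.distrib sum_distrib_left mult.assoc)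
  show "kernel_form K xs u w = - kernel_form K xs w u" for u w
  proof -
    have "kernel_form K xs w u = (\<Sum>a<length xs. \<Sum>b<length xs. w b * K (xs ! b) (xs ! a) * u a)"
      unfolding kernel_form_def by (rule sum.swap)
    also have "\<dots> = - kernel_form K xs u w"
      unfolding kernel_form_def sum_negf[symmetric]
    proof (intro sum.cong refl)
      fix a b
      show "w b * K (xs ! b) (xs ! a) * u a = - (u a * K (xs ! a) (xs ! b) * w b)"
        using skew[of "xs ! b" "xs ! a"] by simp
    qed
    finally show ?thesis by simp
  qed
qed

lemma kernel_form_indicators:
  assumes "a < length xs" "b < length xs"
  shows "kernel_form K xs (\<lambda>t. if t = a then 1 else 0) (\<lambda>t. if t = b then 1 else 0) = K (xs ! a) (xs ! b)"
proof -
  have delta: "(if P then 1 else 0) * y = (if P then y else 0)" "y * (if P then 1 else 0) = (if P then y else 0)"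
    for P and y :: 'b
    by simp_all
  show ?thesis
    using assms unfolding kernel_form_def by (simp only: delta) simp
qed

theorem det_skew_form_mat_eq_pfaffian_sq:
  fixes K :: "'a \<Rightarrow> 'a \<Rightarrow> 'b::field_char_0"
  assumes skew: "\<And>a b. K a b = - K b a"
  shows "det (form_mat K xs xs) = (pfaffian K xs)\<^sup>2"
proof -
  let ?N = "length xs" and ?\<beta> = "kernel_form K xs"
  let ?E = "map (\<lambda>a t. if t = a then 1 else 0) [0..<?N]"
  interpret alternating_form ?\<beta>
    by (rule alternating_form_kernel_form[OF skew])
  have "form_mat K xs xs = form_mat ?\<beta> ?E ?E"
    by (rule eq_matI) (simp_all add: kernel_form_indicators)
  moreover have "pfaffian ?\<beta> ?E = pfaffian K xs"
  proof -
    have "pfaffian ?\<beta> ?E = pfaffian (\<lambda>a b. K (xs ! a) (xs ! b)) [0..<?N]"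
      unfolding pfaffian_map by (rule pfaffian_cong) (simp add: kernel_form_indicators)
    also have "\<dots> = pfaffian K xs"
      using pfaffian_map[of K "nth xs" "[0..<?N]", symmetric] by (simp add: map_nth)
    finally show ?thesis .
  qed
  ultimately show ?thesis
    using det_form_mat_eq_pfaffian_sq[of ?E] by simp
qed

section \<open>Fermionic operators in the computational basis\<close>

text \<open>\<open>jw_sign j b\<close> is the diagonal entry of the Jordan-Wigner string \<open>\<sigma>\<^sub>z\<^sup>\<otimes>\<^sup>j\<close> at \<open>b\<close>.\<close>

definition jw_sign :: "nat \<Rightarrow> bool list \<Rightarrow> real" where
  "jw_sign j b = (\<Prod>i<j. if b ! i then -1 else 1)"

text \<open>Closed forms of \<open>c\<^sub>i v\<close> and \<open>C(x) v\<close>; they agree with \<^const>\<open>apply_op\<close> on bit strings of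
  length \<open>n\<close>.\<close>

definition annihilate :: "nat \<Rightarrow> qstate \<Rightarrow> qstate" where
  "annihilate i v b = (if b ! i then 0 else of_real (jw_sign i b) * v (b[i := True]))"

definition majorana :: "nat \<Rightarrow> (nat \<Rightarrow> real) \<Rightarrow> qstate \<Rightarrow> qstate" where
  "majorana n x v b = (\<Sum>i<n. of_real (x i * jw_sign i b) * v (b[i := \<not> b ! i]))"

definition majorana_state :: "nat \<Rightarrow> (nat \<Rightarrow> real) list \<Rightarrow> qstate" where
  "majorana_state n xs = foldr (majorana n) xs (vacuum n)"

lemma majorana_state_Nil [simp]: "majorana_state n [] = vacuum n"
  and majorana_state_Cons [simp]: "majorana_state n (x # xs) = majorana n x (majorana_state n xs)"
  by (simp_all add: majorana_state_def)

lemma jw_sign_list_update_ge: "j \<le> i \<Longrightarrow> jw_sign j (b[i := c]) = jw_sign j b"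
  unfolding jw_sign_def by (rule prod.cong) auto

lemma jw_sign_flip:
  assumes "i < j" "i < length b"
  shows "jw_sign j (b[i := \<not> b ! i]) = - jw_sign j b"
proof -
  have rest: "(\<Prod>l\<in>{..<j} - {i}. if b[i := \<not> b ! i] ! l then -1 else 1)
      = (\<Prod>l\<in>{..<j} - {i}. if b ! l then -1 else (1::real))"
    by (rule prod.cong) auto
  show ?thesis
    unfolding jw_sign_def using assms
    by (simp add: prod.remove[of "{..<j}" i] rest)
qed

lemma jw_sign_sq [simp]: "jw_sign j b * jw_sign j b = 1"
  unfolding jw_sign_def prod.distrib[symmetric] by (rule prod.neutral) auto

lemma jw_sign_anticommute:
  assumes "k \<noteq> i" "i < length b" "k < length b" "\<not> b ! i"
  shows "jw_sign i b * jw_sign k (b[i := True]) = - (jw_sign k b * jw_sign i (b[k := \<not> b ! k]))"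
proof (cases "k < i")
  case True
  with assms show ?thesis by (simp add: jw_sign_list_update_ge jw_sign_flip)
next
  case False
  with assms have "i < k" by simp
  with assms have "jw_sign k (b[i := True]) = - jw_sign k b"
    using jw_sign_flip[of i k b] by simp
  with \<open>i < k\<close> show ?thesis by (simp add: jw_sign_list_update_ge)
qed

lemma finite_bitstrings: "finite (bitstrings n)"
  using finite_lists_length_eq[of "UNIV :: bool set" n] by (simp add: bitstrings_def)

lemma ann_eq_prod:
  "j < n \<Longrightarrow> ann n j b' b
     = (\<Prod>i<n. (if i < j then sigma_z else if i = j then ket0bra1 else id_qubit) (b' ! i) (b ! i))"
  unfolding ann_def kron_def by (intro prod.cong) (auto simp: nth_append nth_Cons')

lemma ann_entry:
  assumes b': "length b' = n" and b: "length b = n" and j: "j < n"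
  shows "ann n j b' b = (if b = b'[j := True] \<and> \<not> b' ! j then of_real (jw_sign j b') else 0)"
proof -
  define F where "F = (\<lambda>i. (if i < j then sigma_z else if i = j then ket0bra1 else id_qubit) (b' ! i) (b ! i))"
  have ann_prod: "ann n j b' b = (\<Prod>i<n. F i)"
    unfolding F_def by (rule ann_eq_prod[OF j])
  show ?thesis
  proof (cases "b = b'[j := True] \<and> \<not> b' ! j")
    case True
    have "ann n j b' b = (\<Prod>i<n. if i < j then (if b' ! i then -1 else 1) else 1)"
      unfolding ann_prod
      by (intro prod.cong refl) (use True b' j in \<open>auto simp: F_def sigma_z_def ket0bra1_def id_qubit_def\<close>)
    also have "\<dots> = (\<Prod>i<j. if b' ! i then -1 else 1)"
      using j by (intro prod.mono_neutral_cong_right) auto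
    also have "\<dots> = of_real (jw_sign j b')"
      unfolding jw_sign_def of_real_prod by (intro prod.cong refl) simp
    finally show ?thesis
      using True by simp
  next
    case False
    have "\<exists>i<n. F i = 0"
    proof (cases "b' ! j")
      case True
      then show ?thesis using j by (intro exI[of _ j]) (auto simp: F_def ket0bra1_def)
    next
      case b'j: False
      with False have ne: "b \<noteq> b'[j := True]" by simp
      obtain i where i: "i < n" "b ! i \<noteq> b'[j := True] ! i"
        using ne nth_equalityI[of b "b'[j := True]"] b b' by auto
      show ?thesis
      proof (cases "i = j")
        case True
        with i b' b'j have "F j = ket0bra1 False False" by (simp add: F_def)
        with j show ?thesis by (auto simp: ket0bra1_def)
      next
        case False
        with i b' have "b ! i \<noteq> b' ! i" by simp
        with i False show ?thesis by (auto simp: F_def sigma_z_def id_qubit_def)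
      qed
    qed
    with ann_prod False show ?thesis
      by (auto simp: prod_zero_iff)
  qed
qed

lemma apply_ann:
  assumes b': "length b' = n" and j: "j < n"
  shows "apply_op n (ann n j) v b' = annihilate j v b'"
proof -
  have "apply_op n (ann n j) v b'
      = (\<Sum>b\<in>bitstrings n. if b = b'[j := True] then (if b' ! j then 0 else of_real (jw_sign j b')) * v b else 0)"
    unfolding apply_op_def
    by (rule sum.cong[OF refl]) (use b' j in \<open>auto simp: ann_entry bitstrings_def\<close>)
  also have "\<dots> = annihilate j v b'"
    using b' by (subst sum.delta[OF finite_bitstrings]) (auto simp: bitstrings_def annihilate_def)
  finally show ?thesis .
qed

lemma apply_adjoint_ann:
  assumes b': "length b' = n" and j: "j < n"
  shows "apply_op n (adjoint_op (ann n j)) v b'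
       = (if b' ! j then of_real (jw_sign j b') * v (b'[j := False]) else 0)"
proof -
  have entry: "adjoint_op (ann n j) b' b = (if b = b'[j := False] \<and> b' ! j then of_real (jw_sign j b') else 0)"
    if b: "length b = n" for b
  proof -
    have "(b' = b[j := True] \<and> \<not> b ! j) \<longleftrightarrow> (b' ! j \<and> b = b'[j := False])"
      using b b' j by (auto simp: list_update_id) (metis list_update_id list_update_overwrite)+
    with b b' j show ?thesis
      by (auto simp: adjoint_op_def ann_entry jw_sign_list_update_ge)
  qed
  have "apply_op n (adjoint_op (ann n j)) v b'
      = (\<Sum>b\<in>bitstrings n. if b = b'[j := False] then (if b' ! j then of_real (jw_sign j b') else 0) * v b else 0)"
    unfolding apply_op_def
    by (rule sum.cong[OF refl]) (auto simp: entry bitstrings_def)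
  also have "\<dots> = (if b' ! j then of_real (jw_sign j b') * v (b'[j := False]) else 0)"
    using b' by (subst sum.delta[OF finite_bitstrings]) (auto simp: bitstrings_def)
  finally show ?thesis .
qed

lemma apply_majorana_op:
  assumes b': "length b' = n"
  shows "apply_op n (majorana_op n x) v b' = majorana n x v b'"
proof -
  have "apply_op n (majorana_op n x) v b'
      = (\<Sum>i<n. of_real (x i) * (apply_op n (ann n i) v b' + apply_op n (adjoint_op (ann n i)) v b'))"
    unfolding apply_op_def majorana_op_def
    by (simp add: sum_distrib_left sum_distrib_right sum.distrib distrib_left distrib_right mult_ac
        sum.swap[of _ "bitstrings n" "{..<n}"])
  also have "\<dots> = majorana n x v b'"
    unfolding majorana_def
    by (rule sum.cong[OF refl]) (use b' in \<open>auto simp: apply_ann apply_adjoint_ann annihilate_def\<close>)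
  finally show ?thesis .
qed

lemma apply_op_cong: "(\<And>b. length b = n \<Longrightarrow> v b = w b) \<Longrightarrow> apply_op n M v = apply_op n M w"
  unfolding apply_op_def by (intro ext sum.cong) (auto simp: bitstrings_def)

lemma columns_state_eq_majorana_state:
  assumes "X \<in> carrier_mat n r" "length b = n"
  shows "columns_state X b = majorana_state n (map (\<lambda>k i. X $$ (i, k)) [0..<r]) b"
proof -
  have "foldr (\<lambda>k v. apply_op n (majorana_op n (g k)) v) ks (vacuum n) b = majorana_state n (map g ks) b"
    if "length b = n" for g :: "nat \<Rightarrow> nat \<Rightarrow> real" and ks b
    using that
  proof (induction ks arbitrary: b)
    case (Cons k ks)
    have "apply_op n (majorana_op n (g k)) (foldr (\<lambda>k v. apply_op n (majorana_op n (g k)) v) ks (vacuum n)) b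
        = apply_op n (majorana_op n (g k)) (majorana_state n (map g ks)) b"
      by (subst apply_op_cong[of n _ "majorana_state n (map g ks)"]) (auto simp: Cons.IH)
    with Cons.prems show ?case by (simp add: apply_majorana_op)
  qed simp
  with assms show ?thesis by (simp add: columns_state_def)
qed

lemma majorana_cong:
  "(\<And>b. length b = n \<Longrightarrow> v b = w b) \<Longrightarrow> length b = n \<Longrightarrow> majorana n x v b = majorana n x w b"
  unfolding majorana_def by (rule sum.cong) auto

lemma majorana_sum:
  "finite J \<Longrightarrow> majorana n x (\<lambda>b. \<Sum>j\<in>J. c j * f j b) b = (\<Sum>j\<in>J. c j * majorana n x (f j) b)"
  unfolding majorana_def by (simp add: sum_distrib_left mult_ac sum.swap[of _ J])

lemma annihilate_majorana_occupied:
  assumes i: "i < n" and b: "length b = n" and occ: "b ! i"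
  shows "majorana n x (annihilate i v) b = of_real (x i) * v b"
proof -
  have "majorana n x (annihilate i v) b = (\<Sum>k<n. if k = i then of_real (x i) * v b else 0)"
    unfolding majorana_def
  proof (intro sum.cong refl)
    fix k
    show "of_real (x k * jw_sign k b) * annihilate i v (b[k := \<not> b ! k])
        = (if k = i then of_real (x i) * v b else 0)"
    proof (cases "k = i")
      case True
      have "b[i := False, i := True] = b"
        using occ list_update_id[of b i] by simp
      then have "annihilate i v (b[i := False]) = of_real (jw_sign i b) * v b"
        using i b by (simp add: annihilate_def jw_sign_list_update_ge)
      with True occ show ?thesis
        by (simp add: mult_ac flip: of_real_mult)
    next
      case False
      with occ show ?thesis by (simp add: annihilate_def)
    qed
  qed
  with i show ?thesis by simp
qed

lemma annihilate_majorana_empty: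
  assumes i: "i < n" and b: "length b = n" and empty: "\<not> b ! i"
  shows "annihilate i (majorana n x v) b = - majorana n x (annihilate i v) b + of_real (x i) * v b"
proof -
  let ?b' = "b[i := True]"
  have "of_real (jw_sign i b) * (of_real (x k * jw_sign k ?b') * v (?b'[k := \<not> ?b' ! k]))
      = - (of_real (x k * jw_sign k b) * annihilate i v (b[k := \<not> b ! k]))
        + (if k = i then of_real (x i) * v b else 0)" if k: "k < n" for k
  proof (cases "k = i")
    case True
    have "?b'[i := False] = b"
      using empty list_update_id[of b i] by simp
    with True empty i b show ?thesis
      by (simp add: annihilate_def jw_sign_list_update_ge mult_ac flip: of_real_mult)
  next
    case k_i: False
    let ?bk = "b[k := \<not> b ! k]"
    have flip_swap: "?b'[k := \<not> b ! k] = ?bk[i := True]"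
      using k_i by (simp add: list_update_swap)
    have sign: "jw_sign i b * jw_sign k ?b' = - (jw_sign k b * jw_sign i ?bk)"
      using jw_sign_anticommute[OF k_i] i k b empty by simp
    have "of_real (jw_sign i b) * (of_real (x k * jw_sign k ?b') * v (?bk[i := True]))
        = of_real (x k * (jw_sign i b * jw_sign k ?b')) * v (?bk[i := True])"
      by (simp add: mult_ac)
    also have "\<dots> = - (of_real (x k * jw_sign k b) * (of_real (jw_sign i ?bk) * v (?bk[i := True])))"
      unfolding sign by (simp add: mult_ac)
    finally show ?thesis
      using k_i empty by (simp add: flip_swap annihilate_def)
  qed
  then have "annihilate i (majorana n x v) b
      = (\<Sum>k<n. - (of_real (x k * jw_sign k b) * annihilate i v (b[k := \<not> b ! k]))
          + (if k = i then of_real (x i) * v b else 0))"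
    using empty by (simp add: annihilate_def majorana_def sum_distrib_left)
  also have "\<dots> = - majorana n x (annihilate i v) b + of_real (x i) * v b"
    using i by (simp add: majorana_def sum_subtractf)
  finally show ?thesis .
qed

lemma annihilate_majorana:
  assumes "i < n" "length b = n"
  shows "annihilate i (majorana n x v) b = - majorana n x (annihilate i v) b + of_real (x i) * v b"
  using assms
proof (cases "b ! i")
  case True
  with assms show ?thesis
    using annihilate_majorana_occupied[of i n b x v] by (simp add: annihilate_def)
qed (rule annihilate_majorana_empty)

lemma annihilate_vacuum: "i < n \<Longrightarrow> length b = n \<Longrightarrow> annihilate i (vacuum n) b = 0"
  unfolding annihilate_def vacuum_def by (auto dest: arg_cong[where f = "\<lambda>l. l ! i"])

lemma annihilate_majorana_state:
  assumes i: "i < n"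
  shows "length b = n \<Longrightarrow> annihilate i (majorana_state n xs) b
       = (\<Sum>j<length xs. of_real ((-1) ^ j * (xs ! j) i) * majorana_state n (remove_nth j xs) b)"
proof (induction xs arbitrary: b)
  case Nil
  then show ?case using annihilate_vacuum[OF i] by simp
next
  case (Cons x xs)
  have "majorana n x (annihilate i (majorana_state n xs)) b
      = majorana n x (\<lambda>b. \<Sum>j<length xs. of_real ((-1) ^ j * (xs ! j) i) * majorana_state n (remove_nth j xs) b) b"
    by (rule majorana_cong[OF _ Cons.prems]) (rule Cons.IH)
  also have "\<dots> = (\<Sum>j<length xs. of_real ((-1) ^ j * (xs ! j) i) * majorana_state n (x # remove_nth j xs) b)"
    by (simp add: majorana_sum)
  finally have contract: "majorana n x (annihilate i (majorana_state n xs)) b = \<dots>" .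
  have "annihilate i (majorana_state n (x # xs)) b
      = of_real (x i) * majorana_state n xs b
        - (\<Sum>j<length xs. of_real ((-1) ^ j * (xs ! j) i) * majorana_state n (x # remove_nth j xs) b)"
    using annihilate_majorana[OF i Cons.prems] contract by simp
  also have "\<dots> = (\<Sum>j<length (x # xs). of_real ((-1) ^ j * ((x # xs) ! j) i) * majorana_state n (remove_nth j (x # xs)) b)"
    by (simp only: length_Cons sum.lessThan_Suc_shift) (simp add: sum_negf[symmetric])
  finally show ?case .
qed

lemma vacuum_amplitude_Cons:
  "majorana_state n (x # xs) (replicate n False)
     = (\<Sum>j<length xs. of_real ((-1) ^ j * (\<Sum>i<n. x i * (xs ! j) i))
          * majorana_state n (remove_nth j xs) (replicate n False))"
proof -
  let ?z = "replicate n False"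
  have "jw_sign i ?z = 1" if "i < n" for i
    unfolding jw_sign_def by (rule prod.neutral) (use that in auto)
  then have "majorana_state n (x # xs) ?z = (\<Sum>i<n. of_real (x i) * annihilate i (majorana_state n xs) ?z)"
    unfolding majorana_state_Cons majorana_def by (intro sum.cong refl) (simp add: annihilate_def)
  also have "\<dots> = (\<Sum>i<n. of_real (x i) *
       (\<Sum>j<length xs. of_real ((-1) ^ j * (xs ! j) i) * majorana_state n (remove_nth j xs) ?z))"
    by (intro sum.cong refl) (simp add: annihilate_majorana_state)
  also have "\<dots> = (\<Sum>j<length xs. of_real ((-1) ^ j * (\<Sum>i<n. x i * (xs ! j) i))
      * majorana_state n (remove_nth j xs) ?z)"
    by (simp add: sum_distrib_left sum_distrib_right sum.swap[of _ "{..<n}"] mult_ac)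
  finally show ?thesis .
qed

lemma basis_of_set_insert_least:
  assumes "i < n" "\<forall>l\<in>S. i < l"
  shows "v (basis_of_set n (insert i S)) = annihilate i v (basis_of_set n S)"
proof -
  have "basis_of_set n (insert i S) = (basis_of_set n S)[i := True]"
    by (rule nth_equalityI) (use assms in \<open>auto simp: basis_of_set_def nth_list_update\<close>)
  moreover have "jw_sign i (basis_of_set n S) = 1"
    unfolding jw_sign_def by (rule prod.neutral) (use assms in \<open>auto simp: basis_of_set_def\<close>)
  ultimately show ?thesis
    using assms by (auto simp: annihilate_def basis_of_set_def)
qed

section \<open>The amplitudes of the columns state\<close>

datatype wick_index = Site nat | Col nat

text \<open>The entries of the block matrix of the theorem, indexed by the sites \<open>i \<in> C\<close> (rows of
  \<open>X\<close>) and the columns \<open>k\<close> of \<open>X\<close>.\<close>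

definition wick_kernel :: "real mat \<Rightarrow> wick_index \<Rightarrow> wick_index \<Rightarrow> real" where
  "wick_kernel X a b = (case (a, b) of
      (Site i, Col k) \<Rightarrow> X $$ (i, k)
    | (Col k, Site i) \<Rightarrow> - X $$ (i, k)
    | (Col k, Col l) \<Rightarrow>
        (if k < l then (transpose_mat X * X) $$ (k, l)
         else if l < k then - (transpose_mat X * X) $$ (l, k) else 0)
    | (Site i, Site j) \<Rightarrow> 0)"

lemma wick_kernel_skew: "wick_kernel X a b = - wick_kernel X b a"
  by (cases a; cases b) (auto simp: wick_kernel_def)

lemma index_transpose_mult_self:
  "X \<in> carrier_mat n r \<Longrightarrow> k < r \<Longrightarrow> l < r \<Longrightarrow>
     (transpose_mat X * X) $$ (k, l) = (\<Sum>i<n. X $$ (i, k) * X $$ (i, l))"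
  by (auto simp: scalar_prod_def atLeast0LessThan)

lemma vacuum_amplitude:
  assumes X: "X \<in> carrier_mat n r"
  shows "sorted_wrt (<) ks \<Longrightarrow> set ks \<subseteq> {..<r} \<Longrightarrow>
    majorana_state n (map (\<lambda>k i. X $$ (i, k)) ks) (replicate n False)
      = of_real (pfaffian (wick_kernel X) (map Col ks))"
proof (induction "length ks" arbitrary: ks rule: less_induct)
  case less
  let ?col = "\<lambda>k i. X $$ (i, k)"
  show ?case
  proof (cases ks)
    case Nil
    then show ?thesis by (simp add: vacuum_def)
  next
    case (Cons k ks')
    have IH: "majorana_state n (map ?col (remove_nth j ks')) (replicate n False)
        = of_real (pfaffian (wick_kernel X) (map Col (remove_nth j ks')))" for j
      by (rule less.hyps) (use less.prems Cons length_remove_nth_le[of j ks'] set_remove_nth_subset[of j ks']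
          in \<open>auto intro: sorted_wrt_remove_nth\<close>)
    have gram: "(\<Sum>i<n. X $$ (i, k) * X $$ (i, ks' ! j)) = wick_kernel X (Col k) (Col (ks' ! j))"
      if "j < length ks'" for j
    proof -
      have "ks' ! j \<in> set ks'" using that by simp
      with less.prems Cons have "k < ks' ! j" "k < r" "ks' ! j < r" by auto
      then show ?thesis by (simp add: wick_kernel_def index_transpose_mult_self[OF X])
    qed
    have "majorana_state n (map ?col ks) (replicate n False)
        = (\<Sum>j<length ks'. of_real ((-1) ^ j * wick_kernel X (Col k) (Col (ks' ! j))
            * pfaffian (wick_kernel X) (map Col (remove_nth j ks'))))"
      unfolding Cons list.map(2) vacuum_amplitude_Cons by (simp add: remove_nth_map IH gram)
    also have "\<dots> = of_real (pfaffian (wick_kernel X) (map Col ks))"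
      by (simp add: Cons remove_nth_map)
    finally show ?thesis .
  qed
qed

lemma pfaffian_wick_Site_Cons:
  "pfaffian (wick_kernel X) (Site i # map Site cs @ map Col ks)
     = (\<Sum>b<length ks. (-1) ^ (length cs + b) * X $$ (i, ks ! b)
          * pfaffian (wick_kernel X) (map Site cs @ map Col (remove_nth b ks)))"
proof -
  let ?its = "map Site cs @ map Col ks" and ?m = "length cs"
  let ?t = "\<lambda>j. (-1) ^ j * wick_kernel X (Site i) (?its ! j) * pfaffian (wick_kernel X) (remove_nth j ?its)"
  have "pfaffian (wick_kernel X) (Site i # ?its) = (\<Sum>j\<in>{?m..<?m + length ks}. ?t j)"
    by (simp only: pfaffian.simps length_append length_map)
      (rule sum.mono_neutral_right, auto simp: nth_append wick_kernel_def)
  also have "\<dots> = (\<Sum>b<length ks. ?t (?m + b))"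
    using sum.shift_bounds_nat_ivl[of ?t 0 ?m "length ks"] by (simp add: atLeast0LessThan add.commute)
  also have "\<dots> = (\<Sum>b<length ks. (-1) ^ (?m + b) * X $$ (i, ks ! b)
          * pfaffian (wick_kernel X) (map Site cs @ map Col (remove_nth b ks)))"
    by (intro sum.cong refl) (simp add: wick_kernel_def nth_append remove_nth_append_right remove_nth_map)
  finally show ?thesis .
qed

lemma majorana_state_amplitude:
  assumes X: "X \<in> carrier_mat n r"
  shows "sorted_wrt (<) cs \<Longrightarrow> set cs \<subseteq> {..<n} \<Longrightarrow> sorted_wrt (<) ks \<Longrightarrow> set ks \<subseteq> {..<r} \<Longrightarrow>
    majorana_state n (map (\<lambda>k i. X $$ (i, k)) ks) (basis_of_set n (set cs))
      = of_real ((-1) ^ (length cs choose 2) * pfaffian (wick_kernel X) (map Site cs @ map Col ks))"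
proof (induction cs arbitrary: ks)
  case Nil
  have "basis_of_set n {} = replicate n False"
    by (simp add: basis_of_set_def map_replicate_const)
  with Nil show ?case by (simp add: vacuum_amplitude[OF X] binomial_eq_0)
next
  case (Cons i cs)
  let ?col = "\<lambda>k i. X $$ (i, k)" and ?m = "length cs"
  let ?pf = "\<lambda>b. pfaffian (wick_kernel X) (map Site cs @ map Col (remove_nth b ks))"
  have "majorana_state n (map ?col ks) (basis_of_set n (set (i # cs)))
      = annihilate i (majorana_state n (map ?col ks)) (basis_of_set n (set cs))"
    using Cons.prems by (simp add: basis_of_set_insert_least)
  also have "\<dots> = (\<Sum>b<length ks. of_real ((-1) ^ b * X $$ (i, ks ! b))
      * majorana_state n (map ?col (remove_nth b ks)) (basis_of_set n (set cs)))"
    using Cons.prems by (simp add: annihilate_majorana_state basis_of_set_def remove_nth_map)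
  also have "\<dots> = (\<Sum>b<length ks. of_real ((-1) ^ b * X $$ (i, ks ! b) * ((-1) ^ (?m choose 2) * ?pf b)))"
  proof (intro sum.cong refl)
    fix b
    have "majorana_state n (map ?col (remove_nth b ks)) (basis_of_set n (set cs))
        = of_real ((-1) ^ (?m choose 2) * ?pf b)"
      by (rule Cons.IH) (use Cons.prems set_remove_nth_subset[of b ks] in \<open>auto intro: sorted_wrt_remove_nth\<close>)
    then show "of_real ((-1) ^ b * X $$ (i, ks ! b)) * majorana_state n (map ?col (remove_nth b ks)) (basis_of_set n (set cs))
        = of_real ((-1) ^ b * X $$ (i, ks ! b) * ((-1) ^ (?m choose 2) * ?pf b))"
      by simp
  qed
  also have "\<dots> = of_real ((-1) ^ (Suc ?m choose 2) * pfaffian (wick_kernel X) (Site i # map Site cs @ map Col ks))"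
  proof -
    have "Suc ?m choose 2 = (?m choose 2) + ?m"
      by (simp add: numeral_2_eq_2)
    then have "(-1) ^ (Suc ?m choose 2) * (-1) ^ (?m + b) = (-1) ^ (?m choose 2) * ((-1) ^ b :: real)" for b
      by (simp add: power_add mult_ac flip: power_mult_distrib)
    then show ?thesis
      unfolding pfaffian_wick_Site_Cons of_real_sum[symmetric] sum_distrib_left
      by (intro arg_cong[where f = of_real] sum.cong refl) (simp add: mult_ac)
  qed
  finally show ?case by simp
qed

lemma sorted_list_of_set_eq_map_pick:
  assumes "finite C"
  shows "sorted_list_of_set C = map (pick C) [0..<card C]"
proof -
  let ?xs = "map (pick C) [0..<card C]"
  have sorted: "sorted_wrt (<) ?xs"
    unfolding sorted_wrt_iff_nth_less by (auto intro: pick_mono)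
  have "set ?xs = C"
  proof
    show "set ?xs \<subseteq> C" by (auto intro: pick_in_set)
    show "C \<subseteq> set ?xs"
    proof
      fix c assume c: "c \<in> C"
      with assms have "card {a \<in> C. a < c} < card C"
        by (intro psubset_card_mono) auto
      then show "c \<in> set ?xs"
        using pick_card_in_set[OF c] by force
    qed
  qed
  with sorted show ?thesis
    using sorted_list_of_set.idem_if_sorted_distinct[of ?xs] by (simp add: strict_sorted_iff)
qed

lemma pick_atLeast0LessThan: "j < r \<Longrightarrow> pick {0..<r} j = j"
  using pick_reduce_set[of j r UNIV] by (simp add: pick_UNIV atLeast0LessThan lessThan_def)

definition wick_indices :: "nat set \<Rightarrow> nat \<Rightarrow> wick_index list" where
  "wick_indices C r = map Site (sorted_list_of_set C) @ map Col [0..<r]"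

lemma length_wick_indices: "finite C \<Longrightarrow> length (wick_indices C r) = card C + r"
  by (simp add: wick_indices_def)

lemma prob_Y_eq_pfaffian_sq:
  assumes X: "X \<in> carrier_mat n r" and C: "C \<subseteq> {0..<n}"
  shows "prob_Y X C = (pfaffian (wick_kernel X) (wick_indices C r))\<^sup>2"
proof -
  let ?cs = "sorted_list_of_set C"
  from C have fin: "finite C" by (rule finite_subset) simp
  with C have cs: "sorted_wrt (<) ?cs" "set ?cs = C" "set ?cs \<subseteq> {..<n}"
    by auto
  have X_dims: "dim_row X = n" "dim_col X = r" using X by auto
  have "columns_state X (basis_of_set n C)
      = majorana_state n (map (\<lambda>k i. X $$ (i, k)) [0..<r]) (basis_of_set n (set ?cs))"
    using columns_state_eq_majorana_state[OF X] cs by (simp add: basis_of_set_def)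
  also have "\<dots> = of_real ((-1) ^ (length ?cs choose 2) * pfaffian (wick_kernel X) (wick_indices C r))"
    unfolding wick_indices_def by (rule majorana_state_amplitude[OF X]) (use cs in auto)
  finally show ?thesis
    by (simp add: prob_Y_def X_dims norm_mult norm_power power_mult_distrib)
qed

lemma block_matrix_eq_form_mat:
  assumes X: "X \<in> carrier_mat n r" and C: "C \<subseteq> {0..<n}"
  shows "block_matrix X C = form_mat (wick_kernel X) (wick_indices C r) (wick_indices C r)"
proof -
  from C have fin: "finite C" by (rule finite_subset) simp
  have X_dims: "dim_row X = n" "dim_col X = r" using X by auto
  define XC where "XC = submatrix X C {0..<r}"
  have rows_C: "{i. i < n \<and> i \<in> C} = C" using C by auto
  have XC_dims: "dim_row XC = card C" "dim_col XC = r"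
    unfolding XC_def dim_submatrix X_dims rows_C by auto
  have XC_entry: "XC $$ (i, k) = X $$ (pick C i, k)" if "i < card C" "k < r" for i k
    unfolding XC_def using that by (subst submatrix_index) (auto simp: X_dims rows_C pick_atLeast0LessThan)
  define G where "G = transpose_mat X * X"
  have G: "G \<in> carrier_mat r r" unfolding G_def using X by auto
  have skew_dims: "dim_row (skew G) = r" "dim_col (skew G) = r"
    using G by (auto simp: skew_def triu_def)
  have block: "block_matrix X C = four_block_mat (0\<^sub>m (card C) (card C)) XC (- transpose_mat XC) (skew G)"
    unfolding block_matrix_def XC_def[symmetric] G_def[symmetric] Let_def XC_dims X_dims by simp
  have index: "wick_indices C r ! k = (if k < card C then Site (pick C k) else Col (k - card C))"
    if "k < card C + r" for k
    using that fin by (simp add: wick_indices_def nth_append sorted_list_of_set_eq_map_pick)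
  show ?thesis
    unfolding block using XC_dims skew_dims G fin
    by (intro eq_matI) (auto simp: index length_wick_indices XC_entry skew_def triu_def wick_kernel_def G_def[symmetric])
qed

theorem mainTheorem5:
  fixes X :: "real mat" and n r :: nat
  assumes dims: "X \<in> carrier_mat n r"
    and unit_cols: "\<forall>k<r. (\<Sum>i<n. (X $$ (i, k))\<^sup>2) = 1"
    and rank: "vec_space.rank n X = r"
  shows "(\<forall>C. C \<subseteq> {0..<n} \<longrightarrow> prob_Y X C = det (block_matrix X C))
       \<and> (\<Sum>C | C \<subseteq> {0..<n} \<and> odd (card C + r). prob_Y X C) = 0"
proof (intro conjI allI impI)
  fix C assume C: "C \<subseteq> {0..<n}"
  show "prob_Y X C = det (block_matrix X C)"
    unfolding prob_Y_eq_pfaffian_sq[OF dims C] block_matrix_eq_form_mat[OF dims C]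
    by (rule det_skew_form_mat_eq_pfaffian_sq[OF wick_kernel_skew, symmetric])
next
  have "prob_Y X C = 0" if C: "C \<subseteq> {0..<n}" and odd: "odd (card C + r)" for C
  proof -
    from C have "finite C" by (rule finite_subset) simp
    with odd have "pfaffian (wick_kernel X) (wick_indices C r) = 0"
      by (intro pfaffian_odd_length) (simp add: length_wick_indices)
    then show ?thesis
      by (simp add: prob_Y_eq_pfaffian_sq[OF dims C])
  qed
  then show "(\<Sum>C | C \<subseteq> {0..<n} \<and> odd (card C + r). prob_Y X C) = 0"
    by (intro sum.neutral) blast
qed

end
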